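(* In the El Gamal–Costa deterministic interference channel with feedback, under any feedback encoding functions and for every $i\ge1$, letting $U_i=(V_1^{i-1},V_2^{i-1})$, the messages $W_1$ and $W_2$ are conditionally independent given $U_i$, and consequently $X_{1i}$ and $X_{2i}$ are conditionally independent given $U_i$.
   Context: El Gamal–Costa deterministic interference channel: finite alphabets $\mathcal{X}_k,\mathcal{V}_k,\mathcal{Y}_k$ ($k=1,2$); deterministic functions $g_k:\mathcal{X}_k\to\mathcal{V}_k$ and $f_1:\mathcal{X}_1\times\mathcal{V}_2\to\mathcal{Y}_1$, $f_2:\mathcal{X}_2\times\mathcal{V}_1\to\mathcal{Y}_2$, with at each time $V_{ki}=g_k(X_{ki})$, $Y_{1i}=f_1(X_{1i},V_{2i})$, $Y_{2i}=f_2(X_{2i},V_{1i})$. The El Gamal–Costa condition holds: $V_2$ is a deterministic function of $(Y_1,X_1)$ and $V_1$ of $(Y_2,X_2)$. Independent messages $W_1,W_2$ (uniform on finite sets); with feedback, $X_{ki}=f_k^i(W_k,Y_k^{i-1})$ for deterministic functions $f_k^i$. $A^{j}=(A_1,\dots,A_j)$; $U_1$ is constant. *)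

theory Defs
  imports "HOL-Probability.Probability"
begin

record ('x1, 'x2, 'v1, 'v2, 'y1, 'y2) sym =
  sX1 :: 'x1
  sX2 :: 'x2
  sV1 :: 'v1
  sV2 :: 'v2
  sY1 :: 'y1
  sY2 :: 'y2

text \<open>Trajectory of the first n channel uses for messages w1, w2.
  enc_k i w y is the encoder f_k^i applied to the message and the past outputs
  Y_k^{i-1} (a list of length i-1).\<close>
fun traj ::
  "('x1 \<Rightarrow> 'v1) \<Rightarrow> ('x2 \<Rightarrow> 'v2) \<Rightarrow> ('x1 \<Rightarrow> 'v2 \<Rightarrow> 'y1) \<Rightarrow> ('x2 \<Rightarrow> 'v1 \<Rightarrow> 'y2)
   \<Rightarrow> (nat \<Rightarrow> 'w1 \<Rightarrow> 'y1 list \<Rightarrow> 'x1) \<Rightarrow> (nat \<Rightarrow> 'w2 \<Rightarrow> 'y2 list \<Rightarrow> 'x2)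
   \<Rightarrow> 'w1 \<Rightarrow> 'w2 \<Rightarrow> nat \<Rightarrow> ('x1, 'x2, 'v1, 'v2, 'y1, 'y2) sym list" where
  "traj g1 g2 f1 f2 enc1 enc2 w1 w2 0 = []"
| "traj g1 g2 f1 f2 enc1 enc2 w1 w2 (Suc n) =
    (let past = traj g1 g2 f1 f2 enc1 enc2 w1 w2 n;
         x1 = enc1 (Suc n) w1 (map sY1 past);
         x2 = enc2 (Suc n) w2 (map sY2 past);
         v1 = g1 x1; v2 = g2 x2
     in past @ [\<lparr>sX1 = x1, sX2 = x2, sV1 = v1, sV2 = v2, sY1 = f1 x1 v2, sY2 = f2 x2 v1\<rparr>])"

definition cond_indep :: "'o pmf \<Rightarrow> ('o \<Rightarrow> 'a) \<Rightarrow> ('o \<Rightarrow> 'b) \<Rightarrow> ('o \<Rightarrow> 'c) \<Rightarrow> bool" where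
  "cond_indep p A B C \<longleftrightarrow>
     (\<forall>a b c. measure_pmf.prob p {\<omega>. A \<omega> = a \<and> B \<omega> = b \<and> C \<omega> = c}
                * measure_pmf.prob p {\<omega>. C \<omega> = c}
              = measure_pmf.prob p {\<omega>. A \<omega> = a \<and> C \<omega> = c}
                * measure_pmf.prob p {\<omega>. B \<omega> = b \<and> C \<omega> = c})"

end

theory Submission imports Defs begin

(* Fix the time i = m + 1 and let t be the trajectory of the first m
   channel uses.  Since Y1 = f1(X1, V2), user 1 can replay its own inputs from its
   message w1 and the sequence V2^m alone: the input at time k is enc1 k w1 applied to
   the outputs f1(X1, V2) of the earlier steps (function replay).  Symmetrically user 2
   replays its inputs from w2 and V1^m.  Consequently
     (V1^m, V2^m) = (a, b)  <->  g1(replay1 w1 b) = a  and  g2(replay2 w2 a) = b,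
   so each event {U_i = (a, b)} is a rectangle in W1 x W2, and on it X1_i and X2_i
   are functions of (a, b) together with w1 resp. w2 only.  Under the uniform
   distribution on W1 x W2 such a rectangle structure yields conditional independence
   by counting (cond_indep_uniform_product).  Only the structure Y1 = f1(X1, V2),
   Y2 = f2(X2, V1) of the channel is used. *)

lemma length_traj: "length (traj g1 g2 f1 f2 enc1 enc2 w1 w2 n) = n"
  by (induction n) (auto simp: Let_def)

lemma traj_channel:
  fixes g1 g2 f1 f2 enc1 enc2 w1 w2 n
  defines "t \<equiv> traj g1 g2 f1 f2 enc1 enc2 w1 w2 n"
  shows "map sV1 t = map g1 (map sX1 t)" "map sV2 t = map g2 (map sX2 t)"
    and "map sY1 t = map (\<lambda>s. f1 (sX1 s) (sV2 s)) t"
    and "map sY2 t = map (\<lambda>s. f2 (sX2 s) (sV1 s)) t"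
  unfolding t_def by (induction n) (auto simp: Let_def)

definition swap_sym :: "('x1, 'x2, 'v1, 'v2, 'y1, 'y2) sym \<Rightarrow> ('x2, 'x1, 'v2, 'v1, 'y2, 'y1) sym" where
  "swap_sym s = \<lparr>sX1 = sX2 s, sX2 = sX1 s, sV1 = sV2 s, sV2 = sV1 s, sY1 = sY2 s, sY2 = sY1 s\<rparr>"

lemma traj_swap:
  "traj g2 g1 f2 f1 enc2 enc1 w2 w1 n = map swap_sym (traj g1 g2 f1 f2 enc1 enc2 w1 w2 n)"
  by (induction n) (simp_all add: Let_def swap_sym_def comp_def)

text \<open>User 1's outputs are determined by its own inputs and (any extension of) the
  history of V2; this is where Y1 = f1(X1, V2) is used.\<close>
lemma outputs_from_V_history:
  fixes g1 g2 f1 f2 enc1 enc2 w1 w2 n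
  defines "t \<equiv> traj g1 g2 f1 f2 enc1 enc2 w1 w2 n"
  assumes "take n b = map sV2 t"
  shows "map (case_prod f1) (zip (map sX1 t) b) = map sY1 t"
proof -
  have len: "length (map sX1 t) = n" by (simp add: t_def length_traj)
  have "zip (map sX1 t) b = take n (zip (map sX1 t) b)" using len by simp
  also have "\<dots> = zip (map sX1 t) (map sV2 t)" using len assms(2) by (simp add: take_zip)
  also have "\<dots> = map (\<lambda>s. (sX1 s, sV2 s)) t" by (simp add: zip_map_map zip_same_conv_map)
  finally show ?thesis
    using traj_channel(3)[of g1 g2 f1 f2 enc1 enc2 w1 w2 n] unfolding t_def by simp
qed

fun replay :: "('x \<Rightarrow> 'v \<Rightarrow> 'y) \<Rightarrow> (nat \<Rightarrow> 'w \<Rightarrow> 'y list \<Rightarrow> 'x) \<Rightarrow> 'w \<Rightarrow> 'v list \<Rightarrow> nat \<Rightarrow> 'x list" where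
  "replay f enc w b 0 = []"
| "replay f enc w b (Suc n) =
     (let xs = replay f enc w b n in xs @ [enc (Suc n) w (map (case_prod f) (zip xs b))])"

lemma length_replay: "length (replay f enc w b n) = n"
  by (induction n) (auto simp: Let_def)

lemma take_replay: "k \<le> n \<Longrightarrow> take k (replay f enc w b n) = replay f enc w b k"
proof (induction n)
  case (Suc n)
  then show ?case
    using length_replay[of f enc w b n]
    by (cases "k = Suc n") (simp_all add: Let_def length_replay)
qed simp

lemma replay_traj1:
  "take n b = map sV2 (traj g1 g2 f1 f2 enc1 enc2 w1 w2 n) \<Longrightarrow>
   replay f1 enc1 w1 b n = map sX1 (traj g1 g2 f1 f2 enc1 enc2 w1 w2 n)"
proof (induction n)
  case (Suc n)
  let ?t = "traj g1 g2 f1 f2 enc1 enc2 w1 w2 n"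
  have prefix: "take n b = map sV2 ?t"
    using arg_cong[OF Suc.prems, of "take n"] length_traj[of g1 g2 f1 f2 enc1 enc2 w1 w2 n]
    by (simp add: Let_def min_def)
  then have "replay f1 enc1 w1 b n = map sX1 ?t" by (rule Suc.IH)
  with outputs_from_V_history[OF prefix] show ?case by (simp add: Let_def)
qed simp

lemma replay_traj2:
  "take n a = map sV1 (traj g1 g2 f1 f2 enc1 enc2 w1 w2 n) \<Longrightarrow>
   replay f2 enc2 w2 a n = map sX2 (traj g1 g2 f1 f2 enc1 enc2 w1 w2 n)"
  using replay_traj1[of n a g2 g1 f2 f1 enc2 enc1 w2 w1]
  by (simp add: traj_swap[of g1 g2 f1 f2 enc1 enc2 w1 w2 n] swap_sym_def comp_def)

lemma outputs_from_V_history2: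
  "take n a = map sV1 (traj g1 g2 f1 f2 enc1 enc2 w1 w2 n) \<Longrightarrow>
   map (case_prod f2) (zip (map sX2 (traj g1 g2 f1 f2 enc1 enc2 w1 w2 n)) a)
     = map sY2 (traj g1 g2 f1 f2 enc1 enc2 w1 w2 n)"
  using outputs_from_V_history[of n a g2 g1 f2 f1 enc2 enc1 w2 w1]
  by (simp add: traj_swap[of g1 g2 f1 f2 enc1 enc2 w1 w2 n] swap_sym_def comp_def)

lemma next_input_replay1:
  assumes "take n b = map sV2 (traj g1 g2 f1 f2 enc1 enc2 w1 w2 n)"
  shows "sX1 (traj g1 g2 f1 f2 enc1 enc2 w1 w2 (Suc n) ! n) = replay f1 enc1 w1 b (Suc n) ! n"
  using replay_traj1[OF assms] outputs_from_V_history[OF assms]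
  by (simp add: Let_def nth_append length_traj length_replay)

lemma next_input_replay2:
  assumes "take n a = map sV1 (traj g1 g2 f1 f2 enc1 enc2 w1 w2 n)"
  shows "sX2 (traj g1 g2 f1 f2 enc1 enc2 w1 w2 (Suc n) ! n) = replay f2 enc2 w2 a (Suc n) ! n"
  using replay_traj2[OF assms] outputs_from_V_history2[OF assms]
  by (simp add: Let_def nth_append length_traj length_replay)

lemma consistent_V_history:
  assumes a: "map g1 (replay f1 enc1 w1 b m) = a" and b: "map g2 (replay f2 enc2 w2 a m) = b"
  shows "n \<le> m \<Longrightarrow> map sV1 (traj g1 g2 f1 f2 enc1 enc2 w1 w2 n) = take n a \<and>
                     map sV2 (traj g1 g2 f1 f2 enc1 enc2 w1 w2 n) = take n b"
proof (induction n)
  case (Suc n)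
  let ?t = "traj g1 g2 f1 f2 enc1 enc2 w1 w2 n"
  have IH: "take n a = map sV1 ?t" "take n b = map sV2 ?t" using Suc by auto
  have ta: "take (Suc n) a = map g1 (replay f1 enc1 w1 b (Suc n))"
    using a take_replay[of "Suc n" m f1 enc1 w1 b] Suc.prems by (metis take_map)
  have tb: "take (Suc n) b = map g2 (replay f2 enc2 w2 a (Suc n))"
    using b take_replay[of "Suc n" m f2 enc2 w2 a] Suc.prems by (metis take_map)
  have r1: "replay f1 enc1 w1 b n = map sX1 ?t" by (rule replay_traj1[OF IH(2)])
  have r2: "replay f2 enc2 w2 a n = map sX2 ?t" by (rule replay_traj2[OF IH(1)])
  have "map sV1 (traj g1 g2 f1 f2 enc1 enc2 w1 w2 (Suc n)) = map g1 (replay f1 enc1 w1 b (Suc n))"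
    unfolding traj.simps replay.simps Let_def r1 outputs_from_V_history[OF IH(2)]
    using traj_channel(1)[of g1 g2 f1 f2 enc1 enc2 w1 w2 n] by simp
  moreover have "map sV2 (traj g1 g2 f1 f2 enc1 enc2 w1 w2 (Suc n)) = map g2 (replay f2 enc2 w2 a (Suc n))"
    unfolding traj.simps replay.simps Let_def r2 outputs_from_V_history2[OF IH(1)]
    using traj_channel(2)[of g1 g2 f1 f2 enc1 enc2 w1 w2 n] by simp
  ultimately show ?case unfolding ta tb by simp
qed simp

text \<open>In particular the event
  {(V1^n, V2^n) = (a, b)} is a rectangle in the message space.\<close>
lemma V_history_iff:
  "(map sV1 (traj g1 g2 f1 f2 enc1 enc2 w1 w2 n) = a \<and> map sV2 (traj g1 g2 f1 f2 enc1 enc2 w1 w2 n) = b)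
   \<longleftrightarrow> (map g1 (replay f1 enc1 w1 b n) = a \<and> map g2 (replay f2 enc2 w2 a n) = b)"
  (is "?hist \<longleftrightarrow> ?consistent")
proof
  let ?t = "traj g1 g2 f1 f2 enc1 enc2 w1 w2 n"
  assume hist: ?hist
  then have "take n a = map sV1 ?t" "take n b = map sV2 ?t" by (auto simp: length_traj)
  then have "replay f1 enc1 w1 b n = map sX1 ?t" "replay f2 enc2 w2 a n = map sX2 ?t"
    by (simp_all add: replay_traj1 replay_traj2)
  with hist show ?consistent using traj_channel(1,2)[of g1 g2 f1 f2 enc1 enc2 w1 w2 n] by simp
next
  assume consistent: ?consistent
  then have "length a = n" "length b = n" by (metis length_map length_replay)+
  with consistent_V_history[of g1 f1 enc1 w1 b n a g2 f2 enc2 w2 n] consistent show ?hist by simp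
qed

lemma cond_indep_uniform_product:
  fixes S1 :: "'a set" and S2 :: "'b set" and U :: "'a \<times> 'b \<Rightarrow> 'c"
  assumes fin: "finite S1" "finite S2" and ne: "S1 \<noteq> {}" "S2 \<noteq> {}"
    and rect: "\<And>x y c. x \<in> S1 \<Longrightarrow> y \<in> S2 \<Longrightarrow> U (x, y) = c \<longleftrightarrow> P1 c x \<and> P2 c y"
    and A: "\<And>x y. x \<in> S1 \<Longrightarrow> y \<in> S2 \<Longrightarrow> A (x, y) = \<alpha> (U (x, y)) x"
    and B: "\<And>x y. x \<in> S1 \<Longrightarrow> y \<in> S2 \<Longrightarrow> B (x, y) = \<beta> (U (x, y)) y"
  shows "cond_indep (pmf_of_set (S1 \<times> S2)) A B U"
  unfolding cond_indep_def
proof (intro allI)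
  fix a b c
  let ?S = "S1 \<times> S2"
  have prob: "measure_pmf.prob (pmf_of_set ?S) E = card (?S \<inter> E) / card ?S" for E
    using fin ne by (simp add: measure_pmf_of_set)
  have on_level_set: "A (x, y) = \<alpha> c x" "B (x, y) = \<beta> c y"
    if "x \<in> S1" "y \<in> S2" "U (x, y) = c" for x y
    using A B that by simp_all
  define R1 where "R1 = {x\<in>S1. P1 c x}"
  define R2 where "R2 = {y\<in>S2. P2 c y}"
  define Ra where "Ra = {x\<in>S1. P1 c x \<and> \<alpha> c x = a}"
  define Rb where "Rb = {y\<in>S2. P2 c y \<and> \<beta> c y = b}"
  have rects: "?S \<inter> {\<omega>. A \<omega> = a \<and> B \<omega> = b \<and> U \<omega> = c} = Ra \<times> Rb"
    "?S \<inter> {\<omega>. U \<omega> = c} = R1 \<times> R2"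
    "?S \<inter> {\<omega>. A \<omega> = a \<and> U \<omega> = c} = Ra \<times> R2"
    "?S \<inter> {\<omega>. B \<omega> = b \<and> U \<omega> = c} = R1 \<times> Rb"
    unfolding R1_def R2_def Ra_def Rb_def using rect on_level_set by fastforce+
  show "measure_pmf.prob (pmf_of_set ?S) {\<omega>. A \<omega> = a \<and> B \<omega> = b \<and> U \<omega> = c}
               * measure_pmf.prob (pmf_of_set ?S) {\<omega>. U \<omega> = c}
             = measure_pmf.prob (pmf_of_set ?S) {\<omega>. A \<omega> = a \<and> U \<omega> = c}
               * measure_pmf.prob (pmf_of_set ?S) {\<omega>. B \<omega> = b \<and> U \<omega> = c}"
    unfolding prob rects card_cartesian_product by (simp add: algebra_simps)
qed

theorem claim3:
  fixes g1 :: "'x1::finite \<Rightarrow> 'v1::finite" and g2 :: "'x2::finite \<Rightarrow> 'v2::finite"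
    and f1 :: "'x1 \<Rightarrow> 'v2 \<Rightarrow> 'y1::finite" and f2 :: "'x2 \<Rightarrow> 'v1 \<Rightarrow> 'y2::finite"
    and enc1 :: "nat \<Rightarrow> 'w1 \<Rightarrow> 'y1 list \<Rightarrow> 'x1"
    and enc2 :: "nat \<Rightarrow> 'w2 \<Rightarrow> 'y2 list \<Rightarrow> 'x2"
    and W1 :: "'w1 set" and W2 :: "'w2 set" and i :: nat
  assumes EGC2: "\<exists>h2. \<forall>x1 x2. h2 (f1 x1 (g2 x2)) x1 = g2 x2"
    and EGC1: "\<exists>h1. \<forall>x1 x2. h1 (f2 x2 (g1 x1)) x2 = g1 x1"
    and fin1: "finite W1" and ne1: "W1 \<noteq> {}"
    and fin2: "finite W2" and ne2: "W2 \<noteq> {}"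
    and i: "i \<ge> 1"
  shows "(let M = pmf_of_set (W1 \<times> W2);
              T = (\<lambda>(w1, w2) n. traj g1 g2 f1 f2 enc1 enc2 w1 w2 n);
              U = (\<lambda>\<omega>. (map sV1 (T \<omega> (i - 1)), map sV2 (T \<omega> (i - 1))));
              X1 = (\<lambda>\<omega>. sX1 (T \<omega> i ! (i - 1)));
              X2 = (\<lambda>\<omega>. sX2 (T \<omega> i ! (i - 1)))
          in cond_indep M fst snd U \<and> cond_indep M X1 X2 U)"
proof -
  define m where "m = i - 1"
  have i_eq: "i = Suc m" using i m_def by simp
  let ?t = "\<lambda>w1 w2. traj g1 g2 f1 f2 enc1 enc2 w1 w2 m"
  let ?U = "\<lambda>(w1, w2). (map sV1 (?t w1 w2), map sV2 (?t w1 w2))"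
  have rect: "?U (w1, w2) = c \<longleftrightarrow>
      map g1 (replay f1 enc1 w1 (snd c) m) = fst c \<and> map g2 (replay f2 enc2 w2 (fst c) m) = snd c"
    for w1 w2 c
    using V_history_iff[of g1 g2 f1 f2 enc1 enc2 w1 w2 m "fst c" "snd c"] by (cases c) auto
  have inputs:
    "sX1 (traj g1 g2 f1 f2 enc1 enc2 w1 w2 i ! (i - 1)) = replay f1 enc1 w1 (snd (?U (w1, w2))) i ! m"
    "sX2 (traj g1 g2 f1 f2 enc1 enc2 w1 w2 i ! (i - 1)) = replay f2 enc2 w2 (fst (?U (w1, w2))) i ! m"
    for w1 w2
    unfolding i_eq diff_Suc_1
    by (rule next_input_replay1 next_input_replay2; simp add: length_traj)+
  have "cond_indep (pmf_of_set (W1 \<times> W2)) fst snd ?U"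
    by (rule cond_indep_uniform_product[where \<alpha> = "\<lambda>_ w1. w1" and \<beta> = "\<lambda>_ w2. w2"])
      (use fin1 fin2 ne1 ne2 rect in auto)
  moreover have "cond_indep (pmf_of_set (W1 \<times> W2))
      (\<lambda>(w1, w2). sX1 (traj g1 g2 f1 f2 enc1 enc2 w1 w2 i ! (i - 1)))
      (\<lambda>(w1, w2). sX2 (traj g1 g2 f1 f2 enc1 enc2 w1 w2 i ! (i - 1))) ?U"
    by (rule cond_indep_uniform_product[where
          \<alpha> = "\<lambda>c w1. replay f1 enc1 w1 (snd c) i ! m" and \<beta> = "\<lambda>c w2. replay f2 enc2 w2 (fst c) i ! m"])
      (use fin1 fin2 ne1 ne2 rect inputs in auto)
  ultimately show ?thesis
    unfolding Let_def m_def split_def by (rule conjI)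
qed

end
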